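(* Fix a constant $p>0$. Let $q(k,m)$ be any function with $q(k,m)/(km)\to 0$ as $k,m\to\infty$ simultaneously. Then there is no randomized algorithm that, for every instance $M$ of the Anomalous Row Problem of size $k\times m$, probes at most $q(k,m)$ cells of $M$ and outputs the index of the anomalous row with probability at least $p$.
   Context: Anomalous Row Problem: the input is a matrix $M\in\mathbb{F}_2^{k\times m}$ (with $m\ge k+1$) such that every row except one contains exactly $k+1$ zero entries, and the remaining row (the anomalous row) contains exactly $k$ zero entries; the task is to find the anomalous row. The algorithm accesses $M$ only by probing individual cells (each probe reveals one entry). A randomized algorithm may use internal random coins; the success probability is over these coins and must hold for every valid input. *)

theory Defs
  imports "HOL-Probability.Probability"
begin

text \<open>A matrix over F_2 is a function from cells (row, column) to bool
  (True = 1, False = 0); only cells (i,j) with i < k, j < m are relevant.\<close>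
type_synonym matrix = "nat \<times> nat \<Rightarrow> bool"

text \<open>Deterministic adaptive probing algorithm = decision tree.
  Probe c l r probes cell c, continues with l if the entry is 0 (False)
  and with r if it is 1 (True); Leaf i outputs row index i.\<close>
datatype dtree = Leaf nat | Probe "nat \<times> nat" dtree dtree

fun tree_output :: "dtree \<Rightarrow> matrix \<Rightarrow> nat" where
  "tree_output (Leaf i) M = i"
| "tree_output (Probe c l r) M = tree_output (if M c then r else l) M"

fun probed :: "dtree \<Rightarrow> matrix \<Rightarrow> (nat \<times> nat) set" where
  "probed (Leaf i) M = {}"
| "probed (Probe c l r) M = insert c (probed (if M c then r else l) M)"

fun wf_tree :: "nat \<Rightarrow> nat \<Rightarrow> dtree \<Rightarrow> bool" where
  "wf_tree k m (Leaf i) = True"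
| "wf_tree k m (Probe c l r) = (fst c < k \<and> snd c < m \<and> wf_tree k m l \<and> wf_tree k m r)"

definition zeros_in_row :: "nat \<Rightarrow> matrix \<Rightarrow> nat \<Rightarrow> nat" where
  "zeros_in_row m M i = card {j. j < m \<and> \<not> M (i, j)}"

definition ARP_instance :: "nat \<Rightarrow> nat \<Rightarrow> matrix \<Rightarrow> nat \<Rightarrow> bool" where
  "ARP_instance k m M a \<longleftrightarrow> k + 1 \<le> m \<and> a < k \<and> zeros_in_row m M a = k
     \<and> (\<forall>i<k. i \<noteq> a \<longrightarrow> zeros_in_row m M i = k + 1)"

text \<open>A randomized algorithm for size k x m is a probability distribution
  (over the internal coins) on decision trees. It solves the problem with
  at most Q probes and success probability at least p.\<close>
definition solves_ARP :: "nat \<Rightarrow> nat \<Rightarrow> real \<Rightarrow> real \<Rightarrow> dtree pmf \<Rightarrow> bool" where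
  "solves_ARP k m Q p A \<longleftrightarrow>
     (\<forall>t\<in>set_pmf A. wf_tree k m t) \<and>
     (\<forall>M a. ARP_instance k m M a \<longrightarrow>
        (\<forall>t\<in>set_pmf A. real (card (probed t M)) \<le> Q) \<and>
        measure_pmf.prob A {t. tree_output t M = a} \<ge> p)"

end

theory Submission
  imports Defs
begin

text \<open>It suffices to look at k \<times> (k+1) instances with a single 1-entry: the 1 in cell c makes
  row fst c anomalous. A decision tree running on the zero matrix follows one path; it answers
  correctly on the instance with the 1 in c only if it probes c on that path, or if its answer on
  the zero matrix is already fst c. Hence it succeeds on at most (path length) + (k+1) of the
  k(k+1) instances. The zero path cannot be longer than the probe bound, since flipping a
  suitable cell of it yields a run that probes every cell of the zero path. Averaging over the
  coins, success probability p forces p k(k+1) \<le> q + k + 1, contradicting q = o(k m).\<close>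

lemma finite_probed: "finite (probed t M)"
  by (induction t) auto

lemma probed_wf_tree: "wf_tree k m t \<Longrightarrow> probed t M \<subseteq> {..<k} \<times> {..<m}"
  by (induction t) auto

lemma tree_output_fun_upd_unprobed:
  "c \<notin> probed t M \<Longrightarrow> tree_output t (M(c := b)) = tree_output t M"
  by (induction t) auto

text \<open>X stands for the cells probed earlier on the path. Flip the cell of the path whose first
  probe comes last: up to that probe the run on the flipped matrix agrees with the run on M, and
  every other cell of the path has been probed.\<close>
lemma probed_subset_probed_flip:
  assumes "probed t M - X \<noteq> {}"
  shows "\<exists>c \<in> probed t M - X. probed t M - X \<subseteq> probed t (M(c := \<not> M c))"
  using assms
proof (induction t arbitrary: X)
  case (Leaf i)
  then show ?case by simp
next
  case (Probe d l r)
  let ?s = "if M d then r else l"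
  have same_branch: "probed (Probe d l r) (M(c := b)) = insert d (probed ?s (M(c := b)))"
    if "c \<noteq> d" for c b
    using that by simp
  have IH: "\<exists>c \<in> probed ?s M - Y. probed ?s M - Y \<subseteq> probed ?s (M(c := \<not> M c))"
    if "probed ?s M - Y \<noteq> {}" for Y
    using Probe.IH that by (cases "M d") (simp_all only: if_True if_False)
  show ?case
  proof (cases "d \<in> X")
    case True
    with Probe.prems have "probed ?s M - X \<noteq> {}" by auto
    from IH[OF this] obtain c where c: "c \<in> probed ?s M - X"
      and sub: "probed ?s M - X \<subseteq> probed ?s (M(c := \<not> M c))"
      by blast
    have "c \<noteq> d" using c True by auto
    have path: "probed (Probe d l r) M - X = probed ?s M - X" using True by auto
    have "probed (Probe d l r) M - X \<subseteq> probed (Probe d l r) (M(c := \<not> M c))"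
      unfolding path same_branch[OF \<open>c \<noteq> d\<close>] using sub by blast
    with c show ?thesis unfolding path by blast
  next
    case False
    show ?thesis
    proof (cases "probed ?s M - insert d X = {}")
      case True
      then have path: "probed (Probe d l r) M - X = {d}" using False by auto
      have "d \<in> probed (Probe d l r) (M(d := \<not> M d))"
        by (simp only: probed.simps insertI1)
      then show ?thesis unfolding path by blast
    next
      case nonempty: False
      from IH[OF nonempty] obtain c where c: "c \<in> probed ?s M - insert d X"
        and sub: "probed ?s M - insert d X \<subseteq> probed ?s (M(c := \<not> M c))"
        by blast
      have "c \<noteq> d" using c by auto
      have path: "probed (Probe d l r) M - X = insert d (probed ?s M - insert d X)"
        using False by auto
      have "probed (Probe d l r) M - X \<subseteq> probed (Probe d l r) (M(c := \<not> M c))"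
        unfolding path same_branch[OF \<open>c \<noteq> d\<close>] using sub by blast
      with c show ?thesis unfolding path by blast
    qed
  qed
qed

lemma card_probed_le_flip_bound:
  assumes "\<And>c. c \<in> probed t M \<Longrightarrow> real (card (probed t (M(c := \<not> M c)))) \<le> Q"
  shows "real (card (probed t M)) \<le> max Q 0"
proof (cases "probed t M = {}")
  case False
  then obtain c where "c \<in> probed t M" and "probed t M \<subseteq> probed t (M(c := \<not> M c))"
    using probed_subset_probed_flip[of t M "{}"] by auto
  then have "card (probed t M) \<le> card (probed t (M(c := \<not> M c)))"
    by (simp add: card_mono finite_probed)
  with assms[OF \<open>c \<in> probed t M\<close>] show ?thesis by linarith
qed simp

lemma ARP_instance_single_one:
  assumes "fst c < k" "snd c < k + 1"
  shows "ARP_instance k (k + 1) ((\<lambda>_. False)(c := True)) (fst c)"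
proof -
  have "{j. j < k + 1 \<and> \<not> ((\<lambda>_. False)(c := True)) (i, j)} = {..<k + 1}"
    if "i \<noteq> fst c" for i
    using that by auto
  moreover have "{j. j < k + 1 \<and> \<not> ((\<lambda>_. False)(c := True)) (fst c, j)}
      = {..<k + 1} - {snd c}"
    by (cases c) auto
  ultimately show ?thesis
    using assms unfolding ARP_instance_def zeros_in_row_def by auto
qed

lemma card_single_one_successes:
  fixes k :: nat
  defines "R \<equiv> {..<k} \<times> {..<k + 1}"
  assumes wf: "wf_tree k (k + 1) t"
    and bound: "\<And>c. c \<in> R \<Longrightarrow> real (card (probed t ((\<lambda>_. False)(c := True)))) \<le> Q"
  shows "real (card {c \<in> R. tree_output t ((\<lambda>_. False)(c := True)) = fst c})
    \<le> max Q 0 + real (k + 1)"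
    (is "real (card ?W) \<le> _")
proof -
  let ?P = "probed t (\<lambda>_. False)"
  let ?o = "tree_output t (\<lambda>_. False)"
  have "?W \<subseteq> ?P \<union> {?o} \<times> {..<k + 1}"
    using tree_output_fun_upd_unprobed unfolding R_def by fastforce
  then have "card ?W \<le> card (?P \<union> {?o} \<times> {..<k + 1})"
    by (rule card_mono[rotated]) (simp add: finite_probed)
  also have "\<dots> \<le> card ?P + (k + 1)"
    using card_Un_le[of ?P "{?o} \<times> {..<k + 1}"] by (simp add: card_cartesian_product)
  finally have "real (card ?W) \<le> real (card ?P) + real (k + 1)"
    by linarith
  moreover have "real (card ?P) \<le> max Q 0"
    using probed_wf_tree[OF wf] bound unfolding R_def by (intro card_probed_le_flip_bound) auto
  ultimately show ?thesis by linarith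
qed

text \<open>The expected number of events S c that occur is the sum of their probabilities.\<close>
lemma pmf_events_count_bound:
  fixes A :: "'a pmf" and S :: "'b \<Rightarrow> 'a set"
  assumes "finite R"
    and prob: "\<And>c. c \<in> R \<Longrightarrow> p \<le> measure_pmf.prob A (S c)"
    and count: "\<And>t. t \<in> set_pmf A \<Longrightarrow> real (card {c \<in> R. t \<in> S c}) \<le> B"
  shows "p * real (card R) \<le> B"
proof -
  have int_indicator: "integrable (measure_pmf A) (\<lambda>t. indicator (S c) t :: real)" for c
    by (rule measure_pmf.integrable_const_bound[where B = 1]) auto
  have card_eq: "(\<Sum>c\<in>R. indicator (S c) t :: real) = real (card {c \<in> R. t \<in> S c})" for t
    using \<open>finite R\<close> by (simp add: indicator_def sum.If_cases Int_def)
  have "p * real (card R) = (\<Sum>c\<in>R. p)" by simp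
  also have "\<dots> \<le> (\<Sum>c\<in>R. measure_pmf.prob A (S c))" by (rule sum_mono) (rule prob)
  also have "\<dots> = measure_pmf.expectation A (\<lambda>t. \<Sum>c\<in>R. indicator (S c) t)"
    by (simp add: Bochner_Integration.integral_sum[OF int_indicator])
  also have "\<dots> = measure_pmf.expectation A (\<lambda>t. real (card {c \<in> R. t \<in> S c}))"
    by (simp only: card_eq)
  also have "\<dots> \<le> B"
  proof (rule measure_pmf.integral_le_const)
    show "integrable (measure_pmf A) (\<lambda>t. real (card {c \<in> R. t \<in> S c}))"
      by (rule measure_pmf.integrable_const_bound[where B = "real (card R)"])
        (auto intro!: AE_I2 card_mono \<open>finite R\<close>)
    show "AE t in measure_pmf A. real (card {c \<in> R. t \<in> S c}) \<le> B"
      by (rule AE_pmfI) (rule count)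
  qed
  finally show ?thesis .
qed

lemma solves_ARP_probe_lower_bound:
  assumes "solves_ARP k (k + 1) Q p A"
  shows "p * (real k * real (k + 1)) \<le> max Q 0 + real (k + 1)"
proof -
  let ?R = "{..<k} \<times> {..<k + 1}"
  let ?S = "\<lambda>c. {t. tree_output t ((\<lambda>_. False)(c := True)) = fst c}"
  have inst: "ARP_instance k (k + 1) ((\<lambda>_. False)(c := True)) (fst c)" if "c \<in> ?R" for c
    using that by (intro ARP_instance_single_one) auto
  have wf: "wf_tree k (k + 1) t" if "t \<in> set_pmf A" for t
    using assms that unfolding solves_ARP_def by blast
  have probes: "real (card (probed t ((\<lambda>_. False)(c := True)))) \<le> Q"
    if "t \<in> set_pmf A" "c \<in> ?R" for t c
    using assms inst[OF that(2)] that(1) unfolding solves_ARP_def by blast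
  have "p * real (card ?R) \<le> max Q 0 + real (k + 1)"
  proof (rule pmf_events_count_bound)
    show "p \<le> measure_pmf.prob A (?S c)" if "c \<in> ?R" for c
      using assms inst[OF that] unfolding solves_ARP_def by blast
    show "real (card {c \<in> ?R. t \<in> ?S c}) \<le> max Q 0 + real (k + 1)"
      if "t \<in> set_pmf A" for t
      using card_single_one_successes[OF wf[OF that] probes[OF that]] by simp
  qed simp
  then show ?thesis by (simp add: card_cartesian_product distrib_left)
qed

theorem theorem3:
  fixes p :: real and q :: "nat \<Rightarrow> nat \<Rightarrow> real"
  assumes "p > 0"
    and "((\<lambda>(k, m). q k m / (real k * real m)) \<longlongrightarrow> 0) (at_top \<times>\<^sub>F at_top)"
  shows "\<not> (\<forall>k m. k + 1 \<le> m \<longrightarrow> (\<exists>A. solves_ARP k m (q k m) p A))"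
proof
  assume solvable: "\<forall>k m. k + 1 \<le> m \<longrightarrow> (\<exists>A. solves_ARP k m (q k m) p A)"
  define N where "N k = real k * real (k + 1)" for k
  have "LIM k sequentially. (k, k + 1) :> at_top \<times>\<^sub>F at_top"
    by (intro filterlim_Pair) (simp_all add: filterlim_ident filterlim_Suc)
  from filterlim_compose[OF assms(2) this]
  have "((\<lambda>k. q k (k + 1) / N k) \<longlongrightarrow> 0) sequentially"
    by (simp add: N_def)
  then have "((\<lambda>k. max (q k (k + 1) / N k) 0 + 1 / real k) \<longlongrightarrow> max 0 0 + 0) sequentially"
    by (intro tendsto_intros lim_1_over_n)
  then have "eventually (\<lambda>k. max (q k (k + 1) / N k) 0 + 1 / real k < p \<and> k > 0) sequentially"
    using \<open>p > 0\<close> by (auto intro: order_tendstoD eventually_conj eventually_gt_at_top)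
  then obtain k where small: "max (q k (k + 1) / N k) 0 + 1 / real k < p" and "k > 0"
    by (auto simp: eventually_sequentially)
  then have "N k > 0" by (simp add: N_def)
  obtain A where "solves_ARP k (k + 1) (q k (k + 1)) p A"
    using solvable by auto
  then have "p * N k \<le> max (q k (k + 1)) 0 + real (k + 1)"
    unfolding N_def by (rule solves_ARP_probe_lower_bound)
  then have "p \<le> (max (q k (k + 1)) 0 + real (k + 1)) / N k"
    using \<open>N k > 0\<close> by (subst pos_le_divide_eq) simp_all
  also have "\<dots> = max (q k (k + 1) / N k) 0 + 1 / real k"
    using \<open>N k > 0\<close> \<open>k > 0\<close> unfolding add_divide_distrib
    by (simp add: max_divide_distrib_right N_def)
  finally show False using small by simp
qed

end
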